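(* Consider the Markov process described in the context with $K=1$, satisfying Assumption (A) and the ergodicity condition (E). For each $x\in\{-1,1\}^c$ let $\beta_{0,x}$ denote the unique root in $(0,1)$ of equation $(\mathrm E_x)$. Then the largest of the $2^c$ roots $\beta_{0,x}$ is attained at $x=(1,1,\dots,1)$, i.e. $\beta_{0,x}\le\beta_{0,(1,\dots,1)}$ for all $x\in\{-1,1\}^c$.
   Context: Fix integers $c\ge 1$ and $K\ge1$ (in the claim $K=1$). Consider an irreducible continuous-time Markov process on $V\cup W$, where $V$ is finite and $W=\{\mathbf n=(n_0,\dots,n_c): n_0\in\{0,1,\dots\},\ n_i\in\{0,1\}\}$. For each $i\in\{1,\dots,c\}$ and integer $k\le K$ there are nonnegative rates $a_{k,i},b_{k,i},c_{k,i},d_{k,i}$. From $\mathbf n\in W$, for each $i$ and $k\in\{-n_0,\dots,K\}$, the process jumps (changing only coordinates $0$ and $i$) from $(n_0,n_i)=(n_0,0)$ to $(n_0+k,1)$ at rate $a_{k,i}$ and to $(n_0+k,0)$ at rate $b_{k,i}$, and from $(n_0,1)$ to $(n_0+k,1)$ at rate $c_{k,i}$ and to $(n_0+k,0)$ at rate $d_{k,i}$; from $\mathbf n$ it jumps into $V$ with total rate $\sum_i\sum_{k\le -n_0-1}((1-n_i)(a_{k,i}+b_{k,i})+n_i(c_{k,i}+d_{k,i}))$; no other transitions leave $W$, and from $V$ no transitions go to states with $n_0\ge K$. Let $A_i(z)=\sum_{k=-\infty}^K a_{k,i}z^{K-k}$ and similarly $B_i,C_i,D_i$ with $b,c,d$.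 Assumption (A): for each $i$: (i) $A_i(1),B_i(1),C_i(1),D_i(1)<\infty$; (ii) $A_i(1),D_i(1)>0$; (iii) $A_i'(1),B_i'(1),C_i'(1),D_i'(1)<\infty$; (iv) $a_{K,i}=0$ or $d_{K,i}=0$; (v) $b_{K,i}=c_{K,i}\ne0$. Ergodicity condition (E): $0<\sum_{i=1}^c\frac{1}{A_i(1)+D_i(1)}\bigl(D_i(1)(A_i'(1)-KA_i(1)+B_i'(1)-KB_i(1))+A_i(1)(C_i'(1)-KC_i(1)+D_i'(1)-KD_i(1))\bigr)$. Let $F_i(z)=z^K(A_i(1)+B_i(1)-C_i(1)-D_i(1))-B_i(z)+C_i(z)$. For real $\beta_0\in[0,1]$ let $R_i(\beta_0)=\sqrt{F_i(\beta_0)^2+4A_i(\beta_0)D_i(\beta_0)}$ (nonnegative square root). For $x\in\{-1,1\}^c$, equation $(\mathrm E_x)$ in the unknown $\beta_0$ is \[0=\sum_{i=1}^c\Bigl(x_iR_i(\beta_0)+B_i(\beta_0)+C_i(\beta_0)-\beta_0^K\bigl(A_i(1)+B_i(1)+C_i(1)+D_i(1)\bigr)\Bigr).\] *)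

theory Defs
  imports Complex_Main
begin

text \<open>K = 1. A rate family for a fixed i is a function r :: int \<Rightarrow> real,
  r k being the rate for jump size k (only k \<le> 1 matters).
  Generating function R(z) = sum over k \<le> 1 of r k z^(1-k) = sum_j r (1 - j) z^j.\<close>

definition gf :: "(int \<Rightarrow> real) \<Rightarrow> real \<Rightarrow> real" where
  "gf r z = (\<Sum>j. r (1 - int j) * z ^ j)"

definition gf_deriv1 :: "(int \<Rightarrow> real) \<Rightarrow> real" where
  "gf_deriv1 r = (\<Sum>j. real j * r (1 - int j))"

definition Fq :: "(int \<Rightarrow> real) \<Rightarrow> (int \<Rightarrow> real) \<Rightarrow> (int \<Rightarrow> real) \<Rightarrow> (int \<Rightarrow> real) \<Rightarrow> real \<Rightarrow> real" where
  "Fq a b c d z = z * (gf a 1 + gf b 1 - gf c 1 - gf d 1) - gf b z + gf c z"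

definition Rq :: "(int \<Rightarrow> real) \<Rightarrow> (int \<Rightarrow> real) \<Rightarrow> (int \<Rightarrow> real) \<Rightarrow> (int \<Rightarrow> real) \<Rightarrow> real \<Rightarrow> real" where
  "Rq a b c d z = sqrt ((Fq a b c d z)\<^sup>2 + 4 * gf a z * gf d z)"

text \<open>Right-hand side of equation (E_x), K = 1; rates indexed by i \<in> {1..n}.\<close>
definition Ex_fun :: "nat \<Rightarrow> (nat \<Rightarrow> int \<Rightarrow> real) \<Rightarrow> (nat \<Rightarrow> int \<Rightarrow> real) \<Rightarrow> (nat \<Rightarrow> int \<Rightarrow> real)
    \<Rightarrow> (nat \<Rightarrow> int \<Rightarrow> real) \<Rightarrow> (nat \<Rightarrow> real) \<Rightarrow> real \<Rightarrow> real" where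
  "Ex_fun n a b c d x z = (\<Sum>i=1..n. x i * Rq (a i) (b i) (c i) (d i) z + gf (b i) z + gf (c i) z
      - z * (gf (a i) 1 + gf (b i) 1 + gf (c i) 1 + gf (d i) 1))"

end

theory Submission
  imports Defs "HOL-Analysis.Analysis"
begin

text \<open>Let \<open>T\<close> be the right-hand side of \<open>(E\<^sub>x)\<close> for \<open>x = (1,\<dots>,1)\<close>. The square roots are
  nonnegative, so any other sign vector gives a smaller value, and \<open>T \<ge> 0\<close> at each root of
  \<open>(E\<^sub>x)\<close>. In the variable \<open>s = ln z\<close> we have \<open>T(e\<^sup>s) = e\<^sup>s g(s)\<close>, where every summand of \<open>g\<close>
  has the form \<open>P + W + sqrt ((P - W)\<^sup>2 + 4 Q R) = 2 min\<^sub>u\<^sub>>\<^sub>0 max (P + Q u) (W + R / u)\<close>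
  with \<open>P\<close>, \<open>W\<close>, \<open>Q e\<^sup>t\<close> and \<open>R e\<^sup>t\<close> jointly convex in \<open>(s, t)\<close>, being nonnegative combinations
  of exponentials of linear forms. Hence \<open>g\<close> is convex on \<open>s \<le> 0\<close>. Moreover \<open>T(1) = 0\<close> and
  condition (E) says \<open>T'(1) > 0\<close>, so \<open>T < 0\<close> just left of \<open>1\<close>. A convex \<open>g\<close> vanishing at
  \<open>ln \<beta>'\<close> and negative near \<open>0\<close> is negative in between, so \<open>T(\<beta>) \<ge> 0\<close> forces \<open>\<beta> \<le> \<beta>'\<close>.\<close>

definition admissible_rates :: "(int \<Rightarrow> real) \<Rightarrow> bool" where
  "admissible_rates r \<longleftrightarrow> (\<forall>j. r (1 - int j) \<ge> 0) \<and> summable (\<lambda>j. r (1 - int j))"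

lemma gf_summable:
  assumes r: "admissible_rates r" and z: "0 \<le> z" "z \<le> 1"
  shows "summable (\<lambda>j. r (1 - int j) * z ^ j)"
proof (rule summable_comparison_test)
  show "summable (\<lambda>j. r (1 - int j))" using r unfolding admissible_rates_def by simp
  show "\<exists>N. \<forall>n\<ge>N. norm (r (1 - int n) * z ^ n) \<le> r (1 - int n)"
    using r z unfolding admissible_rates_def
    by (auto intro!: exI[of _ 0] mult_left_le simp: abs_mult power_le_one)
qed

lemma gf_nonneg:
  assumes "admissible_rates r" "0 \<le> z" "z \<le> 1"
  shows "gf r z \<ge> 0"
  using assms gf_summable[OF assms] unfolding gf_def admissible_rates_def by (intro suminf_nonneg) auto

lemma gf_pos:
  assumes r: "admissible_rates r" and pos: "gf r 1 > 0" and z: "0 < z" "z \<le> 1"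
  shows "gf r z > 0"
proof (rule ccontr)
  assume "\<not> gf r z > 0"
  with gf_nonneg[OF r, of z] z have "gf r z = 0" by linarith
  hence "\<forall>j. r (1 - int j) * z ^ j = 0"
    using suminf_eq_zero_iff[OF gf_summable[OF r]] r z unfolding gf_def admissible_rates_def by auto
  hence "gf r 1 = 0" using z unfolding gf_def by simp
  with pos show False by simp
qed

lemma gf_has_real_derivative_at_1:
  assumes r: "admissible_rates r" and sm: "summable (\<lambda>j. real j * r (1 - int j))"
  shows "(gf r has_real_derivative gf_deriv1 r) (at 1 within {0..1})"
proof -
  define f' where "f' n x = r (1 - int n) * (real n * x ^ (n - 1))" for n and x :: real
  have d: "\<And>n x. x \<in> {0..1} \<Longrightarrow>
      ((\<lambda>x. r (1 - int n) * x ^ n) has_field_derivative f' n x) (at x within {0..1})"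
    unfolding f'_def by (auto intro!: derivative_eq_intros)
  have u: "uniform_limit {0..1} (\<lambda>n x. \<Sum>i<n. f' i x) (\<lambda>x. \<Sum>i. f' i x) sequentially"
  proof (rule Weierstrass_m_test[OF _ sm])
    fix n and x :: real assume x: "x \<in> {0..1}"
    have "\<bar>x ^ (n - 1)\<bar> \<le> 1" using x by (auto simp: power_le_one)
    hence "\<bar>r (1 - int n)\<bar> * (real n * \<bar>x ^ (n - 1)\<bar>) \<le> \<bar>r (1 - int n)\<bar> * (real n * 1)"
      by (intro mult_left_mono) auto
    thus "norm (f' n x) \<le> real n * r (1 - int n)" using r unfolding admissible_rates_def
      by (simp add: f'_def abs_mult mult.commute)
  qed
  obtain g where g: "\<forall>x\<in>{0..1}. (\<lambda>n. r (1 - int n) * x ^ n) sums g x \<and>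
        (g has_field_derivative (\<Sum>i. f' i x)) (at x within {0..1})"
    using has_field_derivative_series[OF convex_real_interval(5) d u, of 0] by auto
  have g_eq: "g x = gf r x" if "x \<in> {0..1}" for x
    using g that unfolding gf_def by (metis sums_unique)
  have "(\<Sum>i. f' i 1) = gf_deriv1 r" unfolding f'_def gf_deriv1_def by (simp add: mult.commute)
  with g have "(g has_field_derivative gf_deriv1 r) (at 1 within {0..1})"
    by (metis atLeastAtMost_iff order_refl zero_le_one)
  then show ?thesis
    by (rule has_field_derivative_transform_within[where d=1]) (auto simp: g_eq)
qed

definition gf_log :: "(int \<Rightarrow> real) \<Rightarrow> real \<Rightarrow> real" where
  "gf_log r s = gf r (exp s) * exp (- s)"

lemma gf_log_exp_sums:
  assumes r: "admissible_rates r" and s: "s \<le> 0"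
  shows "(\<lambda>j. r (1 - int j) * exp ((real j - 1) * s + t)) sums (gf_log r s * exp t)"
proof -
  have "(\<lambda>j. r (1 - int j) * exp s ^ j) sums gf r (exp s)"
    using gf_summable[OF r] s unfolding gf_def by (simp add: summable_sums)
  from sums_mult2[OF this, of "exp (t - s)"] show ?thesis
    unfolding gf_log_def
    by (simp add: exp_diff exp_minus exp_add exp_of_nat_mult[symmetric] left_diff_distrib field_simps)
qed

lemma convex_on_gf_log_exp:
  assumes r: "admissible_rates r"
  shows "convex_on ({..0} \<times> UNIV) (\<lambda>(s, t). gf_log r s * exp t)"
proof (rule convex_onI)
  show "convex ({..0::real} \<times> (UNIV :: real set))" by (intro convex_Times) auto
  fix u :: real and x y :: "real \<times> real"
  assume u: "0 < u" "u < 1" and xy: "x \<in> {..0} \<times> UNIV" "y \<in> {..0} \<times> UNIV"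
  obtain s1 t1 s2 t2 where x: "x = (s1, t1)" and y: "y = (s2, t2)" by fastforce
  have s: "s1 \<le> 0" "s2 \<le> 0" using xy unfolding x y by auto
  define s' where "s' = (1 - u) * s1 + u * s2"
  define t' where "t' = (1 - u) * t1 + u * t2"
  have "s' \<le> 0" using s u unfolding s'_def by (simp add: add_nonpos_nonpos mult_nonneg_nonpos)
  have "gf_log r s' * exp t' \<le> (1 - u) * (gf_log r s1 * exp t1) + u * (gf_log r s2 * exp t2)"
  proof (rule sums_le[OF _ gf_log_exp_sums[OF r \<open>s' \<le> 0\<close>]])
    show "(\<lambda>j. (1 - u) * (r (1 - int j) * exp ((real j - 1) * s1 + t1))
              + u * (r (1 - int j) * exp ((real j - 1) * s2 + t2)))
          sums ((1 - u) * (gf_log r s1 * exp t1) + u * (gf_log r s2 * exp t2))"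
      by (intro sums_add sums_mult gf_log_exp_sums[OF r] s)
    fix j
    have "exp ((1 - u) *\<^sub>R ((real j - 1) * s1 + t1) + u *\<^sub>R ((real j - 1) * s2 + t2))
        \<le> (1 - u) * exp ((real j - 1) * s1 + t1) + u * exp ((real j - 1) * s2 + t2)"
      using u by (intro convex_onD[OF exp_convex]) auto
    also have "(1 - u) *\<^sub>R ((real j - 1) * s1 + t1) + u *\<^sub>R ((real j - 1) * s2 + t2)
        = (real j - 1) * s' + t'"
      unfolding s'_def t'_def by (simp add: algebra_simps)
    finally show "r (1 - int j) * exp ((real j - 1) * s' + t')
        \<le> (1 - u) * (r (1 - int j) * exp ((real j - 1) * s1 + t1))
          + u * (r (1 - int j) * exp ((real j - 1) * s2 + t2))"
      using r mult_left_mono unfolding admissible_rates_def by (fastforce simp: algebra_simps)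
  qed
  then show "(\<lambda>(s, t). gf_log r s * exp t) ((1 - u) *\<^sub>R x + u *\<^sub>R y)
      \<le> (1 - u) * (\<lambda>(s, t). gf_log r s * exp t) x + u * (\<lambda>(s, t). gf_log r s * exp t) y"
    unfolding x y s'_def t'_def by simp
qed

lemma convex_on_gf_log:
  assumes "admissible_rates r"
  shows "convex_on {..0} (gf_log r)"
proof (rule convex_onI)
  fix u s1 s2 :: real assume "0 < u" "u < 1" "s1 \<in> {..0}" "s2 \<in> {..0}"
  then show "gf_log r ((1 - u) *\<^sub>R s1 + u *\<^sub>R s2) \<le> (1 - u) * gf_log r s1 + u * gf_log r s2"
    using convex_onD[OF convex_on_gf_log_exp[OF assms], of u "(s1, 0)" "(s2, 0)"] by simp
qed simp

lemma gf_log_pos: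
  assumes "admissible_rates r" "gf r 1 > 0" "s \<le> 0"
  shows "gf_log r s > 0"
  using gf_pos[OF assms(1,2), of "exp s"] assms(3) unfolding gf_log_def by simp

lemma discriminant_split:
  fixes P W Q R :: real
  assumes "Q > 0" "R > 0"
  obtains x y where "x > 0" "y > 0" "x * y = Q * R"
    "P + W + sqrt ((P - W)\<^sup>2 + 4 * Q * R) = 2 * (P + x)"
    "P + W + sqrt ((P - W)\<^sup>2 + 4 * Q * R) = 2 * (W + y)"
proof -
  define D where "D = sqrt ((P - W)\<^sup>2 + 4 * Q * R)"
  have D2: "D\<^sup>2 = (P - W)\<^sup>2 + 4 * Q * R" unfolding D_def using assms by simp
  have "\<bar>P - W\<bar>\<^sup>2 < D\<^sup>2" using D2 assms by simp
  hence "\<bar>P - W\<bar> < D" by (rule power_less_imp_less_base) (use assms in \<open>simp add: D_def\<close>)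
  hence "(W - P + D) / 2 > 0" "(P - W + D) / 2 > 0" by auto
  moreover have "(W - P + D) / 2 * ((P - W + D) / 2) = Q * R"
    using D2 by (simp add: power2_eq_square algebra_simps)
  moreover have "P + W + D = 2 * (P + (W - P + D) / 2)" "P + W + D = 2 * (W + (P - W + D) / 2)"
    by (simp_all add: field_simps)
  ultimately show ?thesis using that unfolding D_def by blast
qed

lemma discriminant_root_le_max:
  fixes P W Q R u :: real
  assumes "Q > 0" "R > 0" "u > 0"
  shows "P + W + sqrt ((P - W)\<^sup>2 + 4 * Q * R) \<le> 2 * max (P + Q * u) (W + R / u)"
proof -
  obtain x y where xy: "x > 0" "y > 0" "x * y = Q * R"
    and eq: "P + W + sqrt ((P - W)\<^sup>2 + 4 * Q * R) = 2 * (P + x)"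
            "P + W + sqrt ((P - W)\<^sup>2 + 4 * Q * R) = 2 * (W + y)"
    using discriminant_split[OF assms(1,2)] .
  have "x \<le> Q * u \<or> y \<le> R / u"
  proof (rule ccontr)
    assume "\<not> ?thesis"
    hence "(Q * u) * (R / u) < x * y" using assms xy by (intro mult_strict_mono) auto
    with xy assms show False by simp
  qed
  with eq show ?thesis by (auto simp: max_def)
qed

lemma discriminant_root_eq:
  fixes P W Q R :: real
  assumes "Q > 0" "R > 0"
  shows "\<exists>u>0. P + W + sqrt ((P - W)\<^sup>2 + 4 * Q * R) = 2 * (P + Q * u)
             \<and> P + W + sqrt ((P - W)\<^sup>2 + 4 * Q * R) = 2 * (W + R / u)"
proof -
  obtain x y where "x > 0" "y > 0" "x * y = Q * R"
    and "P + W + sqrt ((P - W)\<^sup>2 + 4 * Q * R) = 2 * (P + x)"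
        "P + W + sqrt ((P - W)\<^sup>2 + 4 * Q * R) = 2 * (W + y)"
    using discriminant_split[OF assms] .
  with assms show ?thesis by (intro exI[of _ "x / Q"]) (auto simp: field_simps)
qed

lemma convex_on_discriminant_root:
  fixes P W Q R :: "real \<Rightarrow> real" and S :: "real set"
  assumes P: "convex_on S P" and W: "convex_on S W"
    and Q: "\<And>s. s \<in> S \<Longrightarrow> Q s > 0" and R: "\<And>s. s \<in> S \<Longrightarrow> R s > 0"
    and Q_exp: "convex_on (S \<times> UNIV) (\<lambda>(s, t). Q s * exp t)"
    and R_exp: "convex_on (S \<times> UNIV) (\<lambda>(s, t). R s * exp t)"
  shows "convex_on S (\<lambda>s. P s + W s + sqrt ((P s - W s)\<^sup>2 + 4 * Q s * R s))"
    (is "convex_on S ?V")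
proof (rule convex_onI)
  show "convex S" using convex_on_imp_convex[OF P] .
  fix \<theta> s1 s2 :: real assume \<theta>: "0 < \<theta>" "\<theta> < 1" and s: "s1 \<in> S" "s2 \<in> S"
  obtain u1 where u1: "u1 > 0" "?V s1 = 2 * (P s1 + Q s1 * u1)" "?V s1 = 2 * (W s1 + R s1 / u1)"
    using discriminant_root_eq[OF Q R] s by blast
  obtain u2 where u2: "u2 > 0" "?V s2 = 2 * (P s2 + Q s2 * u2)" "?V s2 = 2 * (W s2 + R s2 / u2)"
    using discriminant_root_eq[OF Q R] s by blast
  define m where "m = (1 - \<theta>) *\<^sub>R s1 + \<theta> *\<^sub>R s2"
  define t where "t = (1 - \<theta>) * ln u1 + \<theta> * ln u2"
  have "m \<in> S" using convex_onD[OF P, of \<theta> s1 s2] \<open>convex S\<close> s \<theta> unfolding m_def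
    by (simp add: convex_alt)
  have "P m + Q m * exp t \<le> (1 - \<theta>) * (P s1 + Q s1 * u1) + \<theta> * (P s2 + Q s2 * u2)"
    using convex_onD[OF P, of \<theta> s1 s2] convex_onD[OF Q_exp, of \<theta> "(s1, ln u1)" "(s2, ln u2)"]
      s \<theta> u1(1) u2(1) unfolding m_def t_def by (simp add: algebra_simps)
  also have "\<dots> = ((1 - \<theta>) * ?V s1 + \<theta> * ?V s2) / 2"
    by (simp only: u1(2) u2(2)) (simp add: algebra_simps)
  finally have le_P: "P m + Q m * exp t \<le> ((1 - \<theta>) * ?V s1 + \<theta> * ?V s2) / 2" .
  have "W m + R m / exp t \<le> (1 - \<theta>) * (W s1 + R s1 / u1) + \<theta> * (W s2 + R s2 / u2)"
    using convex_onD[OF W, of \<theta> s1 s2] convex_onD[OF R_exp, of \<theta> "(s1, - ln u1)" "(s2, - ln u2)"]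
      s \<theta> u1(1) u2(1) unfolding m_def t_def by (simp add: exp_minus exp_diff algebra_simps divide_inverse)
  also have "\<dots> = ((1 - \<theta>) * ?V s1 + \<theta> * ?V s2) / 2"
    by (simp only: u1(3) u2(3)) (simp add: algebra_simps)
  finally have le_W: "W m + R m / exp t \<le> ((1 - \<theta>) * ?V s1 + \<theta> * ?V s2) / 2" .
  have "?V m \<le> 2 * max (P m + Q m * exp t) (W m + R m / exp t)"
    using discriminant_root_le_max[OF Q R] \<open>m \<in> S\<close> by simp
  also have "\<dots> \<le> (1 - \<theta>) * ?V s1 + \<theta> * ?V s2"
    using max.boundedI[OF le_P le_W] by (simp only: le_divide_eq_numeral1 mult.commute)
  finally show "?V ((1 - \<theta>) *\<^sub>R s1 + \<theta> *\<^sub>R s2) \<le> (1 - \<theta>) * ?V s1 + \<theta> * ?V s2"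
    unfolding m_def .
qed

lemma convex_on_sum_fun:
  assumes "finite I" "convex S" "\<And>i. i \<in> I \<Longrightarrow> convex_on S (f i)"
  shows "convex_on S (\<lambda>x. \<Sum>i\<in>I. f i x)"
  using assms(1,3) by (induction I rule: finite_induct) (auto simp: convex_on_const assms(2))

lemma neg_left_of_pos_derivative:
  fixes f :: "real \<Rightarrow> real"
  assumes "f 1 = 0" "(f has_real_derivative L) (at 1 within {0..1})" "L > 0" "0 \<le> x" "x < 1"
  obtains z where "x < z" "z < 1" "f z < 0"
proof -
  obtain e where e: "e > 0" "\<And>h. h > 0 \<Longrightarrow> 1 - h \<in> {0..1} \<Longrightarrow> h < e \<Longrightarrow> f (1 - h) < f 1"
    using has_real_derivative_pos_inc_left[OF assms(2,3)] by blast
  define h where "h = min (e / 2) ((1 - x) / 2)"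
  have "0 < h" "h < e" "h < 1 - x" using e assms unfolding h_def by (auto simp: min_def)
  with e assms show ?thesis by (intro that[of "1 - h"]) auto
qed

lemma root_le_of_convex_log_form:
  fixes f g :: "real \<Rightarrow> real"
  assumes g: "convex_on {..0} g" and f_g: "\<And>z. z > 0 \<Longrightarrow> f z = z * g (ln z)"
    and f1: "f 1 = 0" and df: "(f has_real_derivative L) (at 1 within {0..1})" "L > 0"
    and \<beta>: "\<beta> \<in> {0<..<1}" "f \<beta> \<ge> 0" and \<beta>': "\<beta>' \<in> {0<..<1}" "f \<beta>' = 0"
  shows "\<beta> \<le> \<beta>'"
proof (rule ccontr)
  assume "\<not> \<beta> \<le> \<beta>'"
  obtain z where z: "\<beta> < z" "z < 1" "f z < 0"
    using neg_left_of_pos_derivative[OF f1 df, of \<beta>] \<beta> by auto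
  define s0 t s where "s0 = ln \<beta>'" and "t = ln \<beta>" and "s = ln z"
  have ord: "s0 < t" "t < s" "s < 0"
    using \<open>\<not> \<beta> \<le> \<beta>'\<close> \<beta> \<beta>' z unfolding s0_def t_def s_def by auto
  have "g s0 = 0" "g t \<ge> 0" "g s < 0"
    using f_g[of \<beta>'] f_g[of \<beta>] f_g[of z] \<beta> \<beta>' z unfolding s0_def t_def s_def
    by (auto simp: zero_le_mult_iff mult_less_0_iff)
  have "convex_on {s0..s} g" using ord by (intro convex_on_subset[OF g]) auto
  from convex_onD_Icc'[OF this, of t] ord
  have "g t \<le> (g s - g s0) / (s - s0) * (t - s0) + g s0" by simp
  also have "\<dots> < 0"
    using \<open>g s0 = 0\<close> \<open>g s < 0\<close> ord by (simp add: divide_neg_pos mult_neg_pos)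
  finally show False using \<open>g t \<ge> 0\<close> by simp
qed

lemma Rq_nonneg:
  assumes "admissible_rates a" "admissible_rates d" "0 \<le> z" "z \<le> 1"
  shows "Rq a b c d z \<ge> 0"
  using gf_nonneg[OF assms(1,3,4)] gf_nonneg[OF assms(2,3,4)] unfolding Rq_def by simp

lemma Rq_at_1:
  assumes "gf a 1 + gf d 1 \<ge> 0"
  shows "Rq a b c d 1 = gf a 1 + gf d 1"
proof -
  have "(Fq a b c d 1)\<^sup>2 + 4 * gf a 1 * gf d 1 = (gf a 1 + gf d 1)\<^sup>2"
    unfolding Fq_def by (simp add: power2_eq_square algebra_simps)
  with assms show ?thesis unfolding Rq_def by simp
qed

lemma Rq_has_derivative_at_1:
  assumes da: "(gf a has_real_derivative a') (at 1 within S)"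
    and db: "(gf b has_real_derivative b') (at 1 within S)"
    and dc: "(gf c has_real_derivative c') (at 1 within S)"
    and dd: "(gf d has_real_derivative d') (at 1 within S)"
    and pos: "gf a 1 + gf d 1 > 0"
  shows "(Rq a b c d has_real_derivative
      ((gf a 1 - gf d 1) * (gf a 1 + gf b 1 - gf c 1 - gf d 1 - b' + c')
       + 2 * (a' * gf d 1 + gf a 1 * d')) / (gf a 1 + gf d 1)) (at 1 within S)"
proof -
  define F' where "F' = gf a 1 + gf b 1 - gf c 1 - gf d 1 - b' + c'"
  have dF: "(Fq a b c d has_real_derivative F') (at 1 within S)"
    unfolding Fq_def[abs_def] F'_def by (auto intro!: derivative_eq_intros db dc)
  have F1: "Fq a b c d 1 = gf a 1 - gf d 1" unfolding Fq_def by simp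
  have dI: "((\<lambda>z. (Fq a b c d z)\<^sup>2 + 4 * gf a z * gf d z) has_real_derivative
      2 * (gf a 1 - gf d 1) * F' + 4 * (a' * gf d 1 + gf a 1 * d')) (at 1 within S)"
    using dF da dd by (auto intro!: derivative_eq_intros simp: F1 algebra_simps)
  have I1: "(Fq a b c d 1)\<^sup>2 + 4 * gf a 1 * gf d 1 = (gf a 1 + gf d 1)\<^sup>2"
    unfolding F1 by (simp add: power2_eq_square algebra_simps)
  have "0 < (Fq a b c d 1)\<^sup>2 + 4 * gf a 1 * gf d 1" using I1 pos by simp
  from DERIV_chain2[OF DERIV_real_sqrt[OF this] dI] pos
  have "(Rq a b c d has_real_derivative inverse (gf a 1 + gf d 1) / 2 *
      (2 * (gf a 1 - gf d 1) * F' + 4 * (a' * gf d 1 + gf a 1 * d'))) (at 1 within S)"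
    unfolding Rq_def[abs_def] I1 by simp
  moreover have "inverse (gf a 1 + gf d 1) / 2 * (2 * (gf a 1 - gf d 1) * F' + 4 * (a' * gf d 1 + gf a 1 * d'))
      = ((gf a 1 - gf d 1) * F' + 2 * (a' * gf d 1 + gf a 1 * d')) / (gf a 1 + gf d 1)"
    using pos by (simp add: field_simps)
  ultimately show ?thesis unfolding F'_def[symmetric] by (rule DERIV_cong)
qed

definition Ex_summand :: "(int \<Rightarrow> real) \<Rightarrow> (int \<Rightarrow> real) \<Rightarrow> (int \<Rightarrow> real) \<Rightarrow> (int \<Rightarrow> real) \<Rightarrow> real \<Rightarrow> real" where
  "Ex_summand a b c d z = Rq a b c d z + gf b z + gf c z - z * (gf a 1 + gf b 1 + gf c 1 + gf d 1)"

lemma Ex_fun_ones: "Ex_fun n a b c d (\<lambda>_. 1) z = (\<Sum>i=1..n. Ex_summand (a i) (b i) (c i) (d i) z)"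
  unfolding Ex_fun_def Ex_summand_def by simp

lemma Ex_fun_le_Ex_fun_ones:
  assumes "\<And>i. i \<in> {1..n} \<Longrightarrow> x i \<le> 1"
    and "\<And>i. i \<in> {1..n} \<Longrightarrow> admissible_rates (a i) \<and> admissible_rates (d i)"
    and "0 \<le> z" "z \<le> 1"
  shows "Ex_fun n a b c d x z \<le> Ex_fun n a b c d (\<lambda>_. 1) z"
  unfolding Ex_fun_def
proof (intro sum_mono add_mono diff_mono order_refl)
  fix i assume "i \<in> {1..n}"
  with assms Rq_nonneg show "x i * Rq (a i) (b i) (c i) (d i) z \<le> 1 * Rq (a i) (b i) (c i) (d i) z"
    by (intro mult_right_mono) auto
qed

lemma Ex_summand_at_1:
  assumes "gf a 1 + gf d 1 \<ge> 0"
  shows "Ex_summand a b c d 1 = 0"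
  using Rq_at_1[OF assms] unfolding Ex_summand_def by simp

text \<open>The \<open>i\<close>-th term of the sum in condition (E).\<close>
definition drift :: "(int \<Rightarrow> real) \<Rightarrow> (int \<Rightarrow> real) \<Rightarrow> (int \<Rightarrow> real) \<Rightarrow> (int \<Rightarrow> real) \<Rightarrow> real" where
  "drift a b c d = 1 / (gf a 1 + gf d 1) *
     (gf d 1 * (gf_deriv1 a - gf a 1 + gf_deriv1 b - gf b 1)
      + gf a 1 * (gf_deriv1 c - gf c 1 + gf_deriv1 d - gf d 1))"

lemma Ex_summand_has_derivative_at_1:
  assumes a: "admissible_rates a" "summable (\<lambda>j. real j * a (1 - int j))"
    and b: "admissible_rates b" "summable (\<lambda>j. real j * b (1 - int j))"
    and c: "admissible_rates c" "summable (\<lambda>j. real j * c (1 - int j))"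
    and d: "admissible_rates d" "summable (\<lambda>j. real j * d (1 - int j))"
    and pos: "gf a 1 + gf d 1 > 0"
  shows "(Ex_summand a b c d has_real_derivative 2 * drift a b c d) (at 1 within {0..1})"
proof -
  note derivs = gf_has_real_derivative_at_1[OF a] gf_has_real_derivative_at_1[OF b]
    gf_has_real_derivative_at_1[OF c] gf_has_real_derivative_at_1[OF d]
  show ?thesis
    unfolding Ex_summand_def[abs_def]
    using Rq_has_derivative_at_1[OF derivs pos] derivs(2,3) pos
    by (auto intro!: derivative_eq_intros simp: drift_def field_simps)
qed

definition summand_log :: "(int \<Rightarrow> real) \<Rightarrow> (int \<Rightarrow> real) \<Rightarrow> (int \<Rightarrow> real) \<Rightarrow> (int \<Rightarrow> real) \<Rightarrow> real \<Rightarrow> real" where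
  "summand_log a b c d s =
     (let P = gf_log b s - (gf a 1 + gf b 1); W = gf_log c s - (gf c 1 + gf d 1)
      in P + W + sqrt ((P - W)\<^sup>2 + 4 * gf_log a s * gf_log d s))"

lemma Ex_summand_eq_summand_log:
  assumes z: "z > 0"
  shows "Ex_summand a b c d z = z * summand_log a b c d (ln z)"
proof -
  have gl: "gf_log r (ln z) = gf r z / z" for r
    unfolding gf_log_def using z by (simp add: exp_minus divide_inverse)
  define P where "P = gf b z / z - (gf a 1 + gf b 1)"
  define W where "W = gf c z / z - (gf c 1 + gf d 1)"
  have discr: "(P - W)\<^sup>2 + 4 * (gf a z / z) * (gf d z / z) = ((Fq a b c d z)\<^sup>2 + 4 * gf a z * gf d z) / z\<^sup>2"
    unfolding P_def W_def Fq_def using z by (simp add: field_simps power2_eq_square)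
  have "sqrt ((P - W)\<^sup>2 + 4 * (gf a z / z) * (gf d z / z)) = Rq a b c d z / z"
    unfolding discr Rq_def real_sqrt_divide using z by simp
  hence "summand_log a b c d (ln z) = P + W + Rq a b c d z / z"
    unfolding summand_log_def Let_def gl P_def[symmetric] W_def[symmetric] by simp
  with z have "z * summand_log a b c d (ln z)
      = (gf b z - z * (gf a 1 + gf b 1)) + (gf c z - z * (gf c 1 + gf d 1)) + Rq a b c d z"
    unfolding P_def W_def by (simp add: distrib_left right_diff_distrib)
  then show ?thesis unfolding Ex_summand_def by (simp add: algebra_simps)
qed

lemma convex_on_summand_log:
  assumes "admissible_rates a" "admissible_rates b" "admissible_rates c" "admissible_rates d"
    and "gf a 1 > 0" "gf d 1 > 0"
  shows "convex_on {..0} (summand_log a b c d)"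
proof -
  have "convex_on {..0} (\<lambda>s. gf_log r s - k)" if "admissible_rates r" for r k
    using convex_on_add[OF convex_on_gf_log[OF that] convex_on_const[THEN iffD2, of _ "- k"]] by simp
  moreover have "convex_on ({..0} \<times> UNIV) (\<lambda>(s, t). gf_log r s * exp t)" if "admissible_rates r" for r
    using convex_on_gf_log_exp[OF that] .
  ultimately show ?thesis
    unfolding summand_log_def[abs_def] Let_def using assms
    by (intro convex_on_discriminant_root) (auto intro: gf_log_pos)
qed

theorem corollary3:
  fixes n :: nat and a b c d :: "nat \<Rightarrow> int \<Rightarrow> real"
  assumes n_pos: "n \<ge> 1"
    and nonneg: "\<And>i k. i \<in> {1..n} \<Longrightarrow> k \<le> 1 \<Longrightarrow>
                  a i k \<ge> 0 \<and> b i k \<ge> 0 \<and> c i k \<ge> 0 \<and> d i k \<ge> 0"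
    and A_i: "\<And>i. i \<in> {1..n} \<Longrightarrow> summable (\<lambda>j. a i (1 - int j)) \<and> summable (\<lambda>j. b i (1 - int j))
                  \<and> summable (\<lambda>j. c i (1 - int j)) \<and> summable (\<lambda>j. d i (1 - int j))"
    and A_ii: "\<And>i. i \<in> {1..n} \<Longrightarrow> gf (a i) 1 > 0 \<and> gf (d i) 1 > 0"
    and A_iii: "\<And>i. i \<in> {1..n} \<Longrightarrow> summable (\<lambda>j. real j * a i (1 - int j))
                  \<and> summable (\<lambda>j. real j * b i (1 - int j))
                  \<and> summable (\<lambda>j. real j * c i (1 - int j))
                  \<and> summable (\<lambda>j. real j * d i (1 - int j))"
    and A_iv: "\<And>i. i \<in> {1..n} \<Longrightarrow> a i 1 = 0 \<or> d i 1 = 0"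
    and A_v: "\<And>i. i \<in> {1..n} \<Longrightarrow> b i 1 = c i 1 \<and> b i 1 \<noteq> 0"
    and E: "0 < (\<Sum>i=1..n. (1 / (gf (a i) 1 + gf (d i) 1)) *
              (gf (d i) 1 * (gf_deriv1 (a i) - gf (a i) 1 + gf_deriv1 (b i) - gf (b i) 1)
               + gf (a i) 1 * (gf_deriv1 (c i) - gf (c i) 1 + gf_deriv1 (d i) - gf (d i) 1)))"
  shows "\<forall>x :: nat \<Rightarrow> real. (\<forall>i\<in>{1..n}. x i = -1 \<or> x i = 1) \<longrightarrow>
           (\<forall>\<beta> \<beta>'. \<beta> \<in> {0<..<1} \<and> Ex_fun n a b c d x \<beta> = 0 \<and>
                   \<beta>' \<in> {0<..<1} \<and> Ex_fun n a b c d (\<lambda>_. 1) \<beta>' = 0 \<longrightarrow> \<beta> \<le> \<beta>')"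
proof (intro allI impI)
  fix x :: "nat \<Rightarrow> real" and \<beta> \<beta>' :: real
  assume x: "\<forall>i\<in>{1..n}. x i = -1 \<or> x i = 1"
    and roots: "\<beta> \<in> {0<..<1} \<and> Ex_fun n a b c d x \<beta> = 0 \<and>
                \<beta>' \<in> {0<..<1} \<and> Ex_fun n a b c d (\<lambda>_. 1) \<beta>' = 0"
  have rates: "admissible_rates (a i) \<and> admissible_rates (b i) \<and> admissible_rates (c i)
      \<and> admissible_rates (d i)" if "i \<in> {1..n}" for i
    using nonneg[OF that] A_i[OF that] unfolding admissible_rates_def by auto
  define g where "g s = (\<Sum>i=1..n. summand_log (a i) (b i) (c i) (d i) s)" for s
  have convex: "convex_on {..0} g"
    unfolding g_def using rates A_ii by (intro convex_on_sum_fun convex_on_summand_log) auto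
  have log_form: "Ex_fun n a b c d (\<lambda>_. 1) z = z * g (ln z)" if "z > 0" for z
    unfolding Ex_fun_ones g_def sum_distrib_left using Ex_summand_eq_summand_log[OF that] by simp
  have at_1: "Ex_fun n a b c d (\<lambda>_. 1) 1 = 0"
    unfolding Ex_fun_ones using A_ii by (intro sum.neutral ballI Ex_summand_at_1) force
  have deriv: "(Ex_fun n a b c d (\<lambda>_. 1) has_real_derivative
      (\<Sum>i=1..n. 2 * drift (a i) (b i) (c i) (d i))) (at 1 within {0..1})"
    unfolding Ex_fun_ones[abs_def] using rates A_iii A_ii
    by (intro DERIV_sum Ex_summand_has_derivative_at_1) (auto intro: add_pos_pos)
  have drift_pos: "(\<Sum>i=1..n. 2 * drift (a i) (b i) (c i) (d i)) > 0"
    using E unfolding drift_def sum_distrib_left[symmetric] by simp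
  have "Ex_fun n a b c d x \<beta> \<le> Ex_fun n a b c d (\<lambda>_. 1) \<beta>"
    using x rates roots by (intro Ex_fun_le_Ex_fun_ones) force+
  with roots have "Ex_fun n a b c d (\<lambda>_. 1) \<beta> \<ge> 0" by simp
  with roots show "\<beta> \<le> \<beta>'"
    using root_le_of_convex_log_form[OF convex log_form at_1 deriv drift_pos] by blast
qed

end
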